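(* Let $k$ be an algebraically closed field of characteristic zero and let $m\geq 1$ be an integer. There exists an irreducible polynomial $\xi_m\in k[x,y]$, unique up to multiplication by a nonzero constant, such that (1) $\xi_m$ vanishes to order $m$ at the point $t_0=(1,1)$, and (2) the Newton polygon of $\xi_m$ is the triangle with vertices $(0,0)$, $(m-1,0)$, $(m,m+1)$.
   Context: The Newton polygon of a polynomial $\sum c_{ij}x^iy^j$ is the convex hull of the exponents $(i,j)$ with $c_{ij}\neq 0$. *)

theory Defs
  imports "HOL-Analysis.Analysis" "HOL-Computational_Algebra.Computational_Algebra"
begin

text \<open>Bivariate polynomials k[x,y] are represented as k[x][y], i.e. type 'a poly poly:
  the outer variable is y, the inner variable is x.\<close>

definition alg_closed :: "'a::field itself \<Rightarrow> bool" where
  "alg_closed _ \<longleftrightarrow> (\<forall>p::'a poly. degree p > 0 \<longrightarrow> (\<exists>z. poly p z = 0))"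

definition bcoeff :: "'a::zero poly poly \<Rightarrow> nat \<Rightarrow> nat \<Rightarrow> 'a" where
  "bcoeff p i j = coeff (coeff p j) i"

text \<open>Translate: p(x + a, y + b).\<close>
definition bshift :: "'a::comm_ring_1 poly poly \<Rightarrow> 'a \<Rightarrow> 'a \<Rightarrow> 'a poly poly" where
  "bshift p a b = pcompose (map_poly (\<lambda>q. pcompose q [:a, 1:]) p) [:[:b:], 1:]"

definition vanishes_to_order :: "'a::comm_ring_1 poly poly \<Rightarrow> 'a \<times> 'a \<Rightarrow> nat \<Rightarrow> bool" where
  "vanishes_to_order p t m \<longleftrightarrow>
     (\<forall>i j. i + j < m \<longrightarrow> bcoeff (bshift p (fst t) (snd t)) i j = 0) \<and>
     (\<exists>i j. i + j = m \<and> bcoeff (bshift p (fst t) (snd t)) i j \<noteq> 0)"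

definition newton_polygon :: "'a::zero poly poly \<Rightarrow> (real \<times> real) set" where
  "newton_polygon p = convex hull {(real i, real j) | i j. bcoeff p i j \<noteq> 0}"

end

theory Submission
  imports Defs
begin

text \<open>
  The polynomial is \<open>\<xi>\<^sub>m = (x\<^sup>m (y - 1)\<^sup>m\<^sup>+\<^sup>1 - (xy - 1)\<^sup>m\<^sup>+\<^sup>1) / (1 - x)\<close>. Its support consists of
  the lattice points \<open>j \<le> i < m\<close> of the triangle together with the vertex \<open>(m, m + 1)\<close>.
  Translating by \<open>(1, 1)\<close> turns \<open>1 - x\<close> into \<open>-x\<close> and the numerator into a polynomial that
  visibly vanishes to order \<open>m + 1\<close> at the origin, so \<open>\<xi>\<^sub>m\<close> vanishes to order \<open>m\<close> at \<open>(1, 1)\<close>.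

  For irreducibility give \<open>x\<^sup>iy\<^sup>j\<close> the weight \<open>(m + 1) i - m j\<close>: all terms of \<open>\<xi>\<^sub>m\<close> have weight
  \<open>\<ge> 0\<close>, and exactly two of them, \<open>1\<close> and \<open>x\<^sup>my\<^sup>m\<^sup>+\<^sup>1\<close>, have weight \<open>0\<close>. The weight is injective
  on \<open>0 \<le> j \<le> m\<close>, so a factor of \<open>y\<close>-degree \<open>\<le> m\<close> has a unique term of minimal weight, and so
  would a product of two such factors. The remaining case is a factor in \<open>k[x]\<close>, which
  divides both \<open>x\<^sup>m\<close> and \<open>\<xi>\<^sub>m(x, 0)\<close>, whose constant term is \<open>\<plusminus>1\<close>.

  For uniqueness, an \<open>\<eta>\<close> with the same Newton polygon differs from a multiple of \<open>\<xi>\<^sub>m\<close> by a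
  polynomial supported on the \<open>m(m + 1)/2\<close> points \<open>j \<le> i < m\<close>, and the \<open>m(m + 1)/2\<close> linear
  conditions of vanishing to order \<open>m\<close> at \<open>(1, 1)\<close> force it to be zero in characteristic \<open>0\<close>.
\<close>

abbreviation (input) polyX :: "'a::comm_ring_1 poly poly" where
  "polyX \<equiv> [:[:0, 1:]:]"

abbreviation (input) polyY :: "'a::comm_ring_1 poly poly" where
  "polyY \<equiv> [:0, 1:]"

section \<open>Translation is a ring homomorphism\<close>

lemma map_poly_pcompose_add:
  "map_poly (\<lambda>s. pcompose s r) (p + q) = map_poly (\<lambda>s. pcompose s r) p + map_poly (\<lambda>s. pcompose s r) q"
  by (intro poly_eqI) (simp add: coeff_map_poly pcompose_add)

lemma map_poly_pcompose_diff:
  fixes r :: "'a::comm_ring_1 poly"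
  shows "map_poly (\<lambda>s. pcompose s r) (p - q) = map_poly (\<lambda>s. pcompose s r) p - map_poly (\<lambda>s. pcompose s r) q"
  by (intro poly_eqI) (simp add: coeff_map_poly pcompose_diff)

lemma map_poly_pcompose_mult:
  fixes r :: "'a::comm_ring_1 poly"
  shows "map_poly (\<lambda>s. pcompose s r) (p * q) = map_poly (\<lambda>s. pcompose s r) p * map_poly (\<lambda>s. pcompose s r) q"
proof (induction p)
  case 0
  then show ?case by simp
next
  case (pCons a p)
  have "map_poly (\<lambda>s. pcompose s r) (pCons a p * q)
      = map_poly (\<lambda>s. pcompose s r) (smult a q + pCons 0 (p * q))"
    by simp
  also have "\<dots> = smult (pcompose a r) (map_poly (\<lambda>s. pcompose s r) q)
      + pCons 0 (map_poly (\<lambda>s. pcompose s r) p * map_poly (\<lambda>s. pcompose s r) q)"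
    by (simp add: map_poly_pcompose_add map_poly_smult pcompose_mult map_poly_pCons pCons.IH)
  also have "\<dots> = map_poly (\<lambda>s. pcompose s r) (pCons a p) * map_poly (\<lambda>s. pcompose s r) q"
    by (simp add: map_poly_pCons)
  finally show ?case .
qed

lemma bshift_diff: "bshift (p - q) a b = bshift p a b - bshift q a b"
  by (simp add: bshift_def map_poly_pcompose_diff pcompose_diff)

lemma bshift_mult: "bshift (p * q) a b = bshift p a b * bshift q a b"
  by (simp add: bshift_def map_poly_pcompose_mult pcompose_mult)

lemma bshift_1: "bshift 1 a b = 1"
  by (simp add: bshift_def pcompose_1)

lemma bshift_power: "bshift (p ^ n) a b = bshift p a b ^ n"
  by (induction n) (simp_all add: bshift_1 bshift_mult)

lemma bshift_const: "bshift [:[:c:]:] a b = [:[:c:]:]"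
  by (simp add: bshift_def map_poly_pCons pcompose_pCons)

lemma bshift_polyX: "bshift polyX a b = [:[:a, 1:]:]"
  by (simp add: bshift_def pcompose_pCons map_poly_pCons)

lemma bshift_polyY: "bshift polyY a b = [:[:b:], 1:]"
  by (simp add: bshift_def pcompose_pCons map_poly_pCons pcompose_1 one_pCons)

section \<open>Vanishing at the origin\<close>

definition order_at_origin_ge :: "'a::comm_ring_1 poly poly \<Rightarrow> nat \<Rightarrow> bool" where
  "order_at_origin_ge p n \<longleftrightarrow> (\<forall>a b. a + b < n \<longrightarrow> bcoeff p a b = 0)"

lemma bcoeff_mult:
  "bcoeff (p * q) I J = (\<Sum>j\<le>J. \<Sum>i\<le>I. bcoeff p i j * bcoeff q (I - i) (J - j))"
  by (simp add: bcoeff_def coeff_mult coeff_sum)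

lemma order_at_origin_ge_0 [simp]: "order_at_origin_ge p 0"
  by (simp add: order_at_origin_ge_def)

lemma order_at_origin_ge_1_iff: "order_at_origin_ge p 1 \<longleftrightarrow> bcoeff p 0 0 = 0"
  by (simp add: order_at_origin_ge_def)

lemma order_at_origin_ge_diff:
  "order_at_origin_ge p n \<Longrightarrow> order_at_origin_ge q n \<Longrightarrow> order_at_origin_ge (p - q) n"
  by (simp add: order_at_origin_ge_def bcoeff_def)

lemma order_at_origin_ge_mult:
  assumes "order_at_origin_ge p n1" "order_at_origin_ge q n2"
  shows "order_at_origin_ge (p * q) (n1 + n2)"
  unfolding order_at_origin_ge_def
proof (intro allI impI)
  fix a b
  assume ab: "a + b < n1 + n2"
  show "bcoeff (p * q) a b = 0"
    unfolding bcoeff_mult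
  proof (intro sum.neutral ballI)
    fix j i
    assume "j \<in> {..b}" "i \<in> {..a}"
    then have "i + j < n1 \<or> (a - i) + (b - j) < n2"
      using ab by auto
    then show "bcoeff p i j * bcoeff q (a - i) (b - j) = 0"
      using assms by (auto simp: order_at_origin_ge_def)
  qed
qed

lemma order_at_origin_ge_power: "order_at_origin_ge p 1 \<Longrightarrow> order_at_origin_ge (p ^ k) k"
  by (induction k) (use order_at_origin_ge_mult[of p 1] in auto)

section \<open>The polynomial \<open>\<xi>\<^sub>m\<close>\<close>

definition xi_coeff :: "nat \<Rightarrow> nat \<Rightarrow> nat \<Rightarrow> 'a::comm_ring_1" where
  "xi_coeff m i j =
     (if i = m \<and> j = Suc m then 1
      else if j \<le> i \<and> i < m then (-1) ^ (m - j) * of_nat (Suc m choose j) else 0)"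

definition xi :: "nat \<Rightarrow> 'a::comm_ring_1 poly poly" where
  "xi m = Poly (map (\<lambda>j. Poly (map (\<lambda>i. xi_coeff m i j) [0..<Suc m])) [0..<Suc (Suc m)])"

lemma coeff_Poly_map_upt: "coeff (Poly (map g [0..<n])) i = (if i < n then g i else 0)"
  by (simp add: nth_default_def del: upt_Suc)

lemma bcoeff_xi: "bcoeff (xi m) i j = xi_coeff m i j"
proof -
  have "bcoeff (xi m) i j = (if j < Suc (Suc m) then (if i < Suc m then xi_coeff m i j else 0) else 0)"
    unfolding bcoeff_def xi_def
    by (simp only: coeff_Poly_map_upt if_distrib[of "\<lambda>p. coeff p i"] coeff_0)
  then show ?thesis
    by (auto simp: xi_coeff_def)
qed

lemma coeff_linear_poly_power_if:
  fixes a b :: "'a::comm_semiring_1"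
  shows "coeff ([:a, b:] ^ n) i = (if i \<le> n then of_nat (n choose i) * b ^ i * a ^ (n - i) else 0)"
proof (cases "i \<le> n")
  case True
  then show ?thesis by (simp add: coeff_linear_poly_power)
next
  case False
  have "degree ([:a, b:] ^ n) \<le> degree [:a, b:] * n"
    by (rule degree_power_le)
  also have "\<dots> \<le> n"
    by simp
  finally show ?thesis
    using False by (simp add: coeff_eq_0)
qed

lemma coeff_X_power: "coeff ([:0, 1::'a::comm_semiring_1:] ^ n) i = (if i = n then 1 else 0)"
  using monom_altdef[of "1::'a" n] by (metis coeff_monom smult_1_left)

lemma of_nat_mult_sign_poly: "(of_nat n * (-1) ^ k :: 'a::comm_ring_1 poly) = [:of_nat n * (-1) ^ k:]"
proof -
  have "((-1) ^ k :: 'a poly) = [:(-1) ^ k:]"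
    by (induction k) (simp_all add: one_pCons)
  then show ?thesis
    by (simp add: of_nat_poly)
qed

lemma bcoeff_xi_numerator:
  "bcoeff (polyX ^ m * (polyY - 1) ^ Suc m - (polyX * polyY - 1) ^ Suc m :: 'a::comm_ring_1 poly poly) i j
   = (if j \<le> Suc m then of_nat (Suc m choose j) * (-1) ^ (Suc m - j)
        * ((if i = m then 1 else 0) - (if i = j then 1 else 0)) else 0)"
proof -
  have Y: "polyY - 1 = ([:-1, 1:] :: 'a poly poly)" and XY: "polyX * polyY - 1 = ([:[:-1:], [:0, 1:]:] :: 'a poly poly)"
    by (simp_all add: one_pCons)
  have P1: "coeff ([:-1, 1:] ^ Suc m :: 'a poly poly) j
      = (if j \<le> Suc m then of_nat (Suc m choose j) * (-1) ^ (Suc m - j) else 0)"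
    by (simp add: coeff_linear_poly_power_if del: power_Suc)
  have P2: "coeff ([:[:-1:], [:0, 1::'a:]:] ^ Suc m) j
      = (if j \<le> Suc m then (of_nat (Suc m choose j) * (-1) ^ (Suc m - j)) * [:0, 1:] ^ j else 0)"
    by (simp add: coeff_linear_poly_power_if mult_ac one_pCons del: power_Suc)
  have P3: "coeff (polyX ^ m * Q) j = [:0, 1::'a:] ^ m * coeff Q j" for Q
    by (induction m) (simp_all add: mult.assoc)
  show ?thesis
  proof (cases "j \<le> Suc m")
    case True
    have "bcoeff ([:[:0, 1:]:] ^ m * [:-1, 1:] ^ Suc m - [:[:-1:], [:0, 1::'a:]:] ^ Suc m) i j
      = coeff ([:0, 1:] ^ m * [:of_nat (Suc m choose j) * (-1) ^ (Suc m - j):]) i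
        - coeff ([:of_nat (Suc m choose j) * (-1) ^ (Suc m - j):] * [:0, 1:] ^ j) i"
      unfolding bcoeff_def coeff_diff P3 P1 P2 using True by (simp only: if_True of_nat_mult_sign_poly)
    also have "\<dots> = of_nat (Suc m choose j) * (-1) ^ (Suc m - j)
        * ((if i = m then 1 else 0) - (if i = j then 1 else 0))"
      using coeff_X_power[where 'a='a]
      by (simp only: mult.commute[of "[:0, 1:] ^ m"] mult_pCons_left smult_0_right add_0_right coeff_smult)
        (simp add: algebra_simps)
    finally show ?thesis
      unfolding Y XY using True by (simp only: if_True)
  next
    case False
    then show ?thesis
      unfolding Y XY bcoeff_def coeff_diff P3 P1 P2 by simp
  qed
qed

lemma xi_identity:
  "(1 - polyX) * (xi m :: 'a::comm_ring_1 poly poly) = polyX ^ m * (polyY - 1) ^ Suc m - (polyX * polyY - 1) ^ Suc m"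
proof (intro poly_eqI)
  fix j i
  have "bcoeff ((1 - polyX) * xi m) i j = (if i = 0 then xi_coeff m 0 j else xi_coeff m i j - xi_coeff m (i - 1) j)"
    by (cases i) (simp_all add: bcoeff_def bcoeff_xi[unfolded bcoeff_def] coeff_pCons one_pCons)
  also have "\<dots> = (if j \<le> Suc m then of_nat (Suc m choose j) * (-1) ^ (Suc m - j)
        * ((if i = m then 1 else 0) - (if i = j then 1 else 0)) else 0)"
  proof (cases "j \<le> m")
    case True
    then show ?thesis
      by (cases "i = 0"; cases "m = 0") (auto simp: xi_coeff_def Suc_diff_le)
  next
    case False
    then consider "j = Suc m" | "Suc m < j"
      by linarith
    then show ?thesis
      by cases (cases "i = 0"; auto simp: xi_coeff_def)+
  qed
  also have "\<dots> = bcoeff (polyX ^ m * (polyY - 1) ^ Suc m - (polyX * polyY - 1) ^ Suc m) i j"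
    by (rule bcoeff_xi_numerator[symmetric])
  finally show "coeff (coeff ((1 - polyX) * xi m) j) i
      = coeff (coeff (polyX ^ m * (polyY - 1) ^ Suc m - (polyX * polyY - 1) ^ Suc m) j) i"
    by (simp only: bcoeff_def)
qed

lemma bshift_xi_identity:
  "- polyX * bshift (xi m :: 'a::comm_ring_1 poly poly) 1 1
     = (polyX + 1) ^ m * polyY ^ Suc m - ((polyX + 1) * (polyY + 1) - 1) ^ Suc m"
proof -
  have X: "bshift polyX 1 1 = (polyX + 1 :: 'a poly poly)"
    unfolding bshift_polyX by (simp add: one_pCons)
  have Y: "bshift polyY 1 1 = (polyY + 1 :: 'a poly poly)"
    unfolding bshift_polyY by (simp add: one_pCons)
  have "bshift ((1 - polyX) * xi m) 1 1
      = bshift (polyX ^ m * (polyY - 1) ^ Suc m - (polyX * polyY - 1) ^ Suc m :: 'a poly poly) 1 1"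
    by (simp only: xi_identity)
  then have "(1 - (polyX + 1)) * bshift (xi m :: 'a poly poly) 1 1
      = (polyX + 1) ^ m * (polyY + 1 - 1) ^ Suc m - ((polyX + 1) * (polyY + 1) - 1) ^ Suc m"
    by (simp only: bshift_mult bshift_diff bshift_power bshift_1 X Y)
  moreover have "1 - (polyX + 1) = (- polyX :: 'a poly poly)" and "polyY + 1 - 1 = (polyY :: 'a poly poly)"
    by simp_all
  ultimately show ?thesis
    by (simp only:)
qed

lemma bcoeff_polyX_mult: "bcoeff (polyX * p) (Suc a) b = bcoeff p a b"
  by (simp add: bcoeff_def coeff_pCons)

lemma xi_vanishes_to_order: "vanishes_to_order (xi m :: 'a::idom poly poly) (1, 1) m"
proof -
  define S where "S = bshift (xi m :: 'a poly poly) 1 1"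
  define W where "W = (polyX + 1) * (polyY + 1) - (1 :: 'a poly poly)"
  have eq: "polyX * (- S) = (polyX + 1) ^ m * polyY ^ Suc m - W ^ Suc m"
    using bshift_xi_identity[of m, where 'a='a] unfolding S_def W_def
    by (simp only: mult_minus_left mult_minus_right)
  have "order_at_origin_ge W 1" and "order_at_origin_ge (polyY :: 'a poly poly) 1"
    unfolding order_at_origin_ge_1_iff by (simp_all add: W_def bcoeff_def one_pCons)
  then have "order_at_origin_ge (W ^ Suc m) (Suc m)"
    and "order_at_origin_ge ((polyX + 1) ^ m * polyY ^ Suc m :: 'a poly poly) (0 + Suc m)"
    by (simp_all only: order_at_origin_ge_power order_at_origin_ge_mult order_at_origin_ge_0)
  then have "order_at_origin_ge ((polyX + 1) ^ m * polyY ^ Suc m - W ^ Suc m) (Suc m)"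
    by (simp only: order_at_origin_ge_diff add_0)
  then have low: "order_at_origin_ge (polyX * (- S)) (Suc m)"
    by (simp only: eq)
  have "coeff (polyX * (- S)) 0 = coeff ((polyX + 1) ^ m * polyY ^ Suc m - W ^ Suc m) 0"
    by (simp only: eq)
  moreover have "coeff W 0 = [:0, 1:]"
    by (simp add: W_def one_pCons)
  ultimately have "[:0, 1:] * coeff S 0 = [:0, 1:] * [:0, 1:] ^ m"
    by (simp only: coeff_mult_0 coeff_diff coeff_0_power) simp
  then have "coeff S 0 = [:0, 1:] ^ m"
    by simp
  then have "bcoeff S m 0 = 1"
    by (simp add: bcoeff_def coeff_X_power)
  moreover have "bcoeff S a b = 0" if "a + b < m" for a b
  proof -
    have "bcoeff (polyX * (- S)) (Suc a) b = 0"
      using low that unfolding order_at_origin_ge_def by simp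
    then show ?thesis
      unfolding bcoeff_polyX_mult by (simp add: bcoeff_def)
  qed
  ultimately show ?thesis
    unfolding vanishes_to_order_def fst_conv snd_conv S_def[symmetric]
    by (metis add_0_right zero_neq_one)
qed

section \<open>The Newton polygon\<close>

abbreviation newton_triangle :: "nat \<Rightarrow> (real \<times> real) set" where
  "newton_triangle m \<equiv> convex hull {(0, 0), (real m - 1, 0), (real m, real m + 1)}"

lemma lattice_point_in_newton_triangle:
  fixes i j m :: nat
  assumes "j \<le> i" "i < m"
  shows "(real i, real j) \<in> newton_triangle m"
proof (cases "m = 1")
  case True
  then have "i = 0" "j = 0"
    using assms by auto
  then show ?thesis
    by (intro hull_inc) simp
next
  case False
  define M I J where "M = real m" and "I = real i" and "J = real j"
  have JI: "J \<le> I" and IM: "I \<le> M - 1" and J0: "J \<ge> 0" and M2: "M \<ge> 2"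
    using assms False by (simp_all add: I_def J_def M_def)
  define w where "w = J / (M + 1)"
  define v where "v = (I - w * M) / (M - 1)"
  define u where "u = 1 - v - w"
  have w0: "w \<ge> 0" and wJ: "w * (M + 1) = J" and vI: "v * (M - 1) = I - w * M"
    using J0 M2 by (simp_all add: w_def v_def)
  have "w * M \<le> J"
    using wJ w0 by (simp add: algebra_simps)
  then have v0: "v \<ge> 0"
    using JI M2 by (simp add: v_def)
  have "v * (M - 1) \<le> (1 - w) * (M - 1)"
    using vI IM wJ w0 by (simp add: algebra_simps)
  then have "v \<le> 1 - w"
    using M2 by simp
  then have u0: "u \<ge> 0"
    by (simp add: u_def)
  have "(real i, real j) = u *\<^sub>R (0, 0) + v *\<^sub>R (real m - 1, 0) + w *\<^sub>R (real m, real m + 1)"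
    using vI wJ by (simp add: I_def J_def M_def algebra_simps)
  then show ?thesis
    unfolding convex_hull_3 using u0 v0 w0
    by (intro CollectI exI[of _ u] exI[of _ v] exI[of _ w]) (simp add: u_def)
qed

lemma lattice_point_in_newton_triangleD:
  fixes i j m :: nat
  assumes "m \<ge> 1" and "(real i, real j) \<in> newton_triangle m"
  shows "(j \<le> i \<and> i < m) \<or> (i = m \<and> j = Suc m)"
proof -
  obtain u v w where uvw: "0 \<le> u" "0 \<le> v" "0 \<le> w" "u + v + w = 1"
    and eq: "(real i, real j) = u *\<^sub>R (0, 0) + v *\<^sub>R (real m - 1, 0) + w *\<^sub>R (real m, real m + 1)"
    using assms(2) unfolding convex_hull_3 by blast
  define M where "M = real m"
  have M1: "M \<ge> 1"
    using assms(1) by (simp add: M_def)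
  have I: "real i = v * (M - 1) + w * M" and J: "real j = w * M + w"
    using eq by (simp_all add: M_def algebra_simps)
  show ?thesis
  proof (cases "w = 1")
    case True
    then have "u = 0" "v = 0"
      using uvw by linarith+
    then have "real i = M" "real j = M + 1"
      using I J True by simp_all
    then show ?thesis
      by (simp add: M_def)
  next
    case False
    then have w1: "w < 1"
      using uvw by linarith
    have "v * (M - 1) \<le> (1 - w) * (M - 1)"
      using uvw M1 by (intro mult_right_mono) auto
    then have "v * (M - 1) \<le> M - 1 - w * M + w"
      by (simp add: algebra_simps)
    then have "real i < M"
      using I w1 by linarith
    moreover have "v * (M - 1) \<ge> 0"
      using uvw M1 by simp
    then have "real j < real i + 1"
      using I J w1 by linarith
    ultimately show ?thesis
      by (simp add: M_def)
  qed
qed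

lemma xi_coeff_neq_0_iff:
  "xi_coeff m i j \<noteq> (0::'a::{idom, ring_char_0}) \<longleftrightarrow> (j \<le> i \<and> i < m) \<or> (i = m \<and> j = Suc m)"
  by (auto simp: xi_coeff_def)

lemma newton_polygon_xi:
  assumes "m \<ge> 1"
  shows "newton_polygon (xi m :: 'a::{idom, ring_char_0} poly poly) = newton_triangle m"
proof
  define S where "S = {(real i, real j) | i j. bcoeff (xi m :: 'a poly poly) i j \<noteq> 0}"
  have "S \<subseteq> newton_triangle m"
  proof
    fix x
    assume "x \<in> S"
    then obtain i j where x: "x = (real i, real j)" and "xi_coeff m i j \<noteq> (0::'a)"
      by (auto simp: S_def bcoeff_xi)
    then consider "j \<le> i" "i < m" | "i = m" "j = Suc m"
      unfolding xi_coeff_neq_0_iff by blast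
    then show "x \<in> newton_triangle m"
      by cases (auto simp: x intro: lattice_point_in_newton_triangle hull_inc)
  qed
  then show "newton_polygon (xi m :: 'a poly poly) \<subseteq> newton_triangle m"
    unfolding newton_polygon_def S_def[symmetric] by (intro hull_minimal) auto
  have in_S: "(real i, real j) \<in> S" if "(j \<le> i \<and> i < m) \<or> (i = m \<and> j = Suc m)" for i j
    unfolding S_def bcoeff_xi using that
    by (intro CollectI exI[of _ i] exI[of _ j]) (simp add: xi_coeff_neq_0_iff)
  have "(real 0, real 0) \<in> S" "(real (m - 1), real 0) \<in> S" "(real m, real (Suc m)) \<in> S"
    by (rule in_S, use assms in simp)+
  then have "{(0, 0), (real m - 1, 0), (real m, real m + 1)} \<subseteq> S"
    using assms by (simp add: of_nat_diff add.commute)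
  then show "newton_triangle m \<subseteq> newton_polygon (xi m :: 'a poly poly)"
    unfolding newton_polygon_def S_def[symmetric] by (rule hull_mono)
qed

lemma support_if_newton_polygon_eq_newton_triangle:
  assumes "m \<ge> 1" "newton_polygon p = newton_triangle m" "bcoeff p i j \<noteq> 0"
  shows "(j \<le> i \<and> i < m) \<or> (i = m \<and> j = Suc m)"
proof (rule lattice_point_in_newton_triangleD[OF assms(1)])
  have "(real i, real j) \<in> newton_polygon p"
    unfolding newton_polygon_def using assms(3) by (intro hull_inc) auto
  then show "(real i, real j) \<in> newton_triangle m"
    using assms(2) by simp
qed

section \<open>Irreducibility\<close>

definition weight :: "int \<Rightarrow> int \<Rightarrow> nat \<Rightarrow> nat \<Rightarrow> int" where
  "weight \<alpha> \<beta> i j = \<alpha> * int i + \<beta> * int j"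

definition unique_min_term :: "int \<Rightarrow> int \<Rightarrow> 'a::zero poly poly \<Rightarrow> nat \<Rightarrow> nat \<Rightarrow> bool" where
  "unique_min_term \<alpha> \<beta> p a b \<longleftrightarrow> bcoeff p a b \<noteq> 0 \<and>
     (\<forall>i j. bcoeff p i j \<noteq> 0 \<longrightarrow> (i, j) \<noteq> (a, b) \<longrightarrow> weight \<alpha> \<beta> a b < weight \<alpha> \<beta> i j)"

lemma weight_add: "weight \<alpha> \<beta> (i + i') (j + j') = weight \<alpha> \<beta> i j + weight \<alpha> \<beta> i' j'"
  by (simp add: weight_def algebra_simps)

lemma weight_split: "i \<le> I \<Longrightarrow> j \<le> J \<Longrightarrow> weight \<alpha> \<beta> I J = weight \<alpha> \<beta> i j + weight \<alpha> \<beta> (I - i) (J - j)"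
  using weight_add[of \<alpha> \<beta> i "I - i" j "J - j"] by simp

lemma unique_min_term_le:
  "unique_min_term \<alpha> \<beta> p a b \<Longrightarrow> bcoeff p i j \<noteq> 0 \<Longrightarrow> weight \<alpha> \<beta> a b \<le> weight \<alpha> \<beta> i j"
  unfolding unique_min_term_def by (cases "(i, j) = (a, b)") force+

lemma sum_eq_single:
  assumes "finite A" "x \<in> A" "\<And>y. y \<in> A \<Longrightarrow> y \<noteq> x \<Longrightarrow> f y = 0"
  shows "sum f A = f x"
  using assms by (simp add: sum.remove[of A x] sum.neutral)

lemma unique_min_term_mult:
  fixes p q :: "'a::idom poly poly"
  assumes P: "unique_min_term \<alpha> \<beta> p a b" and Q: "unique_min_term \<alpha> \<beta> q c d"
  shows "unique_min_term \<alpha> \<beta> (p * q) (a + c) (b + d)"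
proof -
  let ?w = "weight \<alpha> \<beta>"
  have term_gt: "?w (a + c) (b + d) < ?w I J"
    if ij: "i \<le> I" "j \<le> J" and nz: "bcoeff p i j * bcoeff q (I - i) (J - j) \<noteq> 0"
      and ne: "(i, j) \<noteq> (a, b) \<or> (I - i, J - j) \<noteq> (c, d)" for i j I J
  proof -
    have "?w a b \<le> ?w i j" "?w c d \<le> ?w (I - i) (J - j)"
      using nz unique_min_term_le[OF P] unique_min_term_le[OF Q] by auto
    moreover have "?w a b < ?w i j \<or> ?w c d < ?w (I - i) (J - j)"
      using ne nz P Q unfolding unique_min_term_def by auto
    ultimately show ?thesis
      using weight_split[OF ij(1,2), of \<alpha> \<beta>] weight_add[of \<alpha> \<beta> a c b d] by linarith
  qed
  have zero: "bcoeff p i j * bcoeff q (a + c - i) (b + d - j) = 0"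
    if "i \<le> a + c" "j \<le> b + d" "(i, j) \<noteq> (a, b)" for i j
    using term_gt[OF that(1,2)] that(3) by force
  have "bcoeff (p * q) (a + c) (b + d)
      = (\<Sum>j\<le>b + d. \<Sum>i\<le>a + c. bcoeff p i j * bcoeff q (a + c - i) (b + d - j))"
    by (rule bcoeff_mult)
  also have "\<dots> = (\<Sum>i\<le>a + c. bcoeff p i b * bcoeff q (a + c - i) d)"
    using zero by (subst sum_eq_single[of _ b]) (auto intro!: sum.neutral)
  also have "\<dots> = bcoeff p a b * bcoeff q c d"
    using zero[of _ b] by (subst sum_eq_single[of _ a]) auto
  finally have "bcoeff (p * q) (a + c) (b + d) = bcoeff p a b * bcoeff q c d" .
  then have "bcoeff (p * q) (a + c) (b + d) \<noteq> 0"
    using P Q by (simp add: unique_min_term_def)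
  moreover have "?w (a + c) (b + d) < ?w I J" if "bcoeff (p * q) I J \<noteq> 0" "(I, J) \<noteq> (a + c, b + d)" for I J
  proof -
    from that(1) obtain j where "j \<in> {..J}" and "(\<Sum>i\<le>I. bcoeff p i j * bcoeff q (I - i) (J - j)) \<noteq> 0"
      unfolding bcoeff_mult by (auto elim: sum.not_neutral_contains_not_neutral)
    then obtain i where "i \<le> I" "j \<le> J" "bcoeff p i j * bcoeff q (I - i) (J - j) \<noteq> 0"
      by (auto elim: sum.not_neutral_contains_not_neutral)
    moreover have "(i, j) \<noteq> (a, b) \<or> (I - i, J - j) \<noteq> (c, d)"
      using that(2) \<open>i \<le> I\<close> \<open>j \<le> J\<close> by auto
    ultimately show ?thesis
      by (rule term_gt)
  qed
  ultimately show ?thesis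
    unfolding unique_min_term_def by blast
qed

lemma finite_bcoeff_support: "finite {(i, j). bcoeff p i j \<noteq> 0}"
proof (rule finite_subset)
  show "{(i, j). bcoeff p i j \<noteq> 0} \<subseteq> (\<Union>j\<le>degree p. (\<lambda>i. (i, j)) ` {..degree (coeff p j)})"
  proof safe
    fix i j
    assume "bcoeff p i j \<noteq> 0"
    then have "coeff p j \<noteq> 0" "coeff (coeff p j) i \<noteq> 0"
      by (auto simp: bcoeff_def)
    then have "j \<le> degree p" "i \<le> degree (coeff p j)"
      by (auto intro: le_degree)
    then show "(i, j) \<in> (\<Union>j\<le>degree p. (\<lambda>i. (i, j)) ` {..degree (coeff p j)})"
      by auto
  qed
qed simp

lemma unique_min_term_exists:
  assumes "p \<noteq> 0"
    and inj: "\<And>i j i' j'. bcoeff p i j \<noteq> 0 \<Longrightarrow> bcoeff p i' j' \<noteq> 0 \<Longrightarrow>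
      weight \<alpha> \<beta> i j = weight \<alpha> \<beta> i' j' \<Longrightarrow> (i, j) = (i', j')"
  shows "\<exists>a b. unique_min_term \<alpha> \<beta> p a b"
proof -
  define S where "S = {(i, j). bcoeff p i j \<noteq> 0}"
  have "finite S"
    unfolding S_def by (rule finite_bcoeff_support)
  have "coeff (coeff p (degree p)) (degree (coeff p (degree p))) \<noteq> 0"
    using assms(1) by simp
  then have "S \<noteq> {}"
    unfolding S_def bcoeff_def by blast
  obtain a b where ab: "(a, b) \<in> S" and min: "\<And>i j. (i, j) \<in> S \<Longrightarrow> \<not> weight \<alpha> \<beta> i j < weight \<alpha> \<beta> a b"
    using ex_is_arg_min_if_finite[OF \<open>finite S\<close> \<open>S \<noteq> {}\<close>, of "case_prod (weight \<alpha> \<beta>)"]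
    unfolding is_arg_min_def by fastforce
  have "unique_min_term \<alpha> \<beta> p a b"
    unfolding unique_min_term_def
  proof (intro conjI allI impI)
    show "bcoeff p a b \<noteq> 0"
      using ab by (simp add: S_def)
    fix i j
    assume ij: "bcoeff p i j \<noteq> 0" "(i, j) \<noteq> (a, b)"
    then show "weight \<alpha> \<beta> a b < weight \<alpha> \<beta> i j"
      using min[of i j] inj[of a b i j] ab by (force simp: S_def)
  qed
  then show ?thesis
    by blast
qed

lemma weight_inj_on_strip:
  assumes "j \<le> m" "j' \<le> m" "weight (int (Suc m)) (- int m) i j = weight (int (Suc m)) (- int m) i' j'"
  shows "(i, j) = (i', j')"
proof -
  define k where "k = (int i - int j) - (int i' - int j')"
  have e: "int (Suc m) * k = int j' - int j"
    using assms(3) by (simp add: weight_def k_def algebra_simps)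
  have "\<not> k \<ge> 1"
  proof
    assume "k \<ge> 1"
    then have "int (Suc m) * k \<ge> int (Suc m)"
      using mult_left_mono[of 1 k "int (Suc m)"] by simp
    then show False
      using e assms(1,2) by linarith
  qed
  moreover have "\<not> k \<le> -1"
  proof
    assume "k \<le> -1"
    then have "int (Suc m) * k \<le> - int (Suc m)"
      using mult_left_mono[of k "-1" "int (Suc m)"] by simp
    then show False
      using e assms(1,2) by linarith
  qed
  ultimately have "k = 0"
    by linarith
  with e show ?thesis
    by (simp add: k_def)
qed

lemma coeff_xi_eq_0: "Suc m < j \<Longrightarrow> coeff (xi m) j = 0"
  by (intro poly_eqI) (auto simp: bcoeff_xi[unfolded bcoeff_def] xi_coeff_def)

lemma coeff_xi_top: "coeff (xi m) (Suc m) = (monom 1 m :: 'a::comm_ring_1 poly)"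
  by (intro poly_eqI) (simp add: bcoeff_xi[unfolded bcoeff_def] xi_coeff_def)

lemma degree_xi: "degree (xi m :: 'a::comm_ring_1 poly poly) = Suc m"
proof (rule antisym)
  show "degree (xi m :: 'a poly poly) \<le> Suc m"
    by (rule degree_le) (simp add: coeff_xi_eq_0)
  show "Suc m \<le> degree (xi m :: 'a poly poly)"
    by (rule le_degree) (simp add: coeff_xi_top)
qed

lemma xi_neq_0: "(xi m :: 'a::comm_ring_1 poly poly) \<noteq> 0"
  using degree_xi[of m, where 'a='a] by auto

lemma xi_not_unique_min_term:
  assumes "m \<ge> 1"
  shows "\<not> unique_min_term (int (Suc m)) (- int m) (xi m :: 'a::idom poly poly) a b"
proof
  let ?w = "weight (int (Suc m)) (- int m)"
  assume min: "unique_min_term (int (Suc m)) (- int m) (xi m :: 'a poly poly) a b"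
  have "bcoeff (xi m :: 'a poly poly) a b \<noteq> 0"
    using min by (simp add: unique_min_term_def)
  then have "b \<le> a \<and> a < m \<or> a = m \<and> b = Suc m"
    by (auto simp: bcoeff_xi xi_coeff_def split: if_splits)
  then have "0 \<le> ?w a b"
  proof
    assume "b \<le> a \<and> a < m"
    then have "int m * int b \<le> int m * int a"
      by (intro mult_left_mono) auto
    then show ?thesis
      by (simp add: weight_def algebra_simps)
  qed (simp add: weight_def algebra_simps)
  moreover have "bcoeff (xi m :: 'a poly poly) 0 0 \<noteq> 0" "bcoeff (xi m :: 'a poly poly) m (Suc m) \<noteq> 0"
    using assms by (simp_all add: bcoeff_xi xi_coeff_def)
  moreover have "?w 0 0 = 0" "?w m (Suc m) = 0"
    by (simp_all add: weight_def algebra_simps)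
  ultimately have "(a, b) = (0, 0)" and "(a, b) = (m, Suc m)"
    using min unfolding unique_min_term_def by (metis not_le)+
  then show False
    by simp
qed

lemma degree_eq_0_if_dvd_monom:
  fixes g :: "'a::idom poly"
  assumes "g dvd monom 1 m" "poly g 0 \<noteq> 0"
  shows "degree g = 0"
proof -
  obtain h where gh: "monom 1 m = g * h"
    using assms(1) by (elim dvdE)
  have "g * h \<noteq> 0"
    by (metis gh monom_eq_0_iff one_neq_zero)
  then have "g \<noteq> 0" "h \<noteq> 0"
    by auto
  have "m = order 0 (g * h)"
    using order_power_n_n[of "0::'a" m] by (simp add: gh[symmetric] monom_altdef)
  also have "\<dots> = order 0 h"
    using \<open>g * h \<noteq> 0\<close> assms(2) by (simp add: order_mult order_0I)
  finally have "monom 1 m dvd h"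
    using \<open>h \<noteq> 0\<close> by (simp add: monom_1_dvd_iff)
  then have "degree (monom (1::'a) m) \<le> degree h"
    using \<open>h \<noteq> 0\<close> by (rule dvd_imp_degree_le)
  then have "m \<le> degree h"
    by (simp add: degree_monom_eq)
  moreover have "degree g + degree h = m"
    by (metis degree_monom_eq degree_mult_eq gh one_neq_zero \<open>g \<noteq> 0\<close> \<open>h \<noteq> 0\<close>)
  ultimately show ?thesis
    by linarith
qed

lemma xi_no_factor_in_x:
  fixes g :: "'a::field poly"
  assumes "m \<ge> 1" "xi m = f * [:g:]"
  shows "is_unit g"
proof -
  have coeff_xi: "coeff (xi m) k = coeff f k * g" for k
    using assms(2) by simp
  have "g \<noteq> 0"
    using xi_neq_0[of m, where 'a='a] assms(2) by auto
  moreover have "g dvd monom 1 m"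
    using coeff_xi[of "Suc m"] by (simp add: coeff_xi_top)
  moreover have "poly (coeff (xi m :: 'a poly poly) 0) 0 \<noteq> 0"
    using assms(1) by (simp add: poly_0_coeff_0 bcoeff_xi[unfolded bcoeff_def] xi_coeff_def)
  then have "poly g 0 \<noteq> 0"
    using coeff_xi[of 0] by simp
  ultimately show ?thesis
    by (simp add: is_unit_iff_degree degree_eq_0_if_dvd_monom)
qed

lemma xi_irreducible:
  assumes "m \<ge> 1"
  shows "irreducible (xi m :: 'a::field poly poly)"
proof (rule irreducibleI)
  show "(xi m :: 'a poly poly) \<noteq> 0"
    by (rule xi_neq_0)
  show "\<not> is_unit (xi m :: 'a poly poly)"
    using degree_xi[of m, where 'a='a] by (auto simp: is_unit_poly_iff)
  fix f g :: "'a poly poly"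
  assume fg: "xi m = f * g"
  then have "f \<noteq> 0" "g \<noteq> 0"
    using xi_neq_0[of m, where 'a='a] by auto
  then have deg: "degree f + degree g = Suc m"
    using fg degree_mult_eq degree_xi[of m, where 'a='a] by metis
  consider "degree f \<le> m" "degree g \<le> m" | "degree f = 0" | "degree g = 0"
    using deg by linarith
  then show "is_unit f \<or> is_unit g"
  proof cases
    case 1
    let ?w = "weight (int (Suc m)) (- int m)"
    have inj: "\<And>i j i' j'. bcoeff h i j \<noteq> 0 \<Longrightarrow> bcoeff h i' j' \<noteq> 0 \<Longrightarrow> ?w i j = ?w i' j' \<Longrightarrow> (i, j) = (i', j')"
      if "degree h \<le> m" for h :: "'a poly poly"
      using that le_degree[of h] weight_inj_on_strip[of _ m]
      by (metis bcoeff_def coeff_0 le_trans)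
    obtain a b c d where "unique_min_term (int (Suc m)) (- int m) f a b"
      "unique_min_term (int (Suc m)) (- int m) g c d"
      using unique_min_term_exists[OF \<open>f \<noteq> 0\<close> inj[OF 1(1)]]
        unique_min_term_exists[OF \<open>g \<noteq> 0\<close> inj[OF 1(2)]] by blast
    then have "unique_min_term (int (Suc m)) (- int m) (xi m :: 'a poly poly) (a + c) (b + d)"
      unfolding fg by (rule unique_min_term_mult)
    with xi_not_unique_min_term[OF assms] show ?thesis
      by blast
  next
    case 2
    then obtain f0 where "f = [:f0:]"
      by (elim degree_eq_zeroE) simp
    then show ?thesis
      using xi_no_factor_in_x[OF assms, of g f0] fg by (simp add: mult.commute is_unit_const_poly_iff)
  next
    case 3
    then obtain g0 where "g = [:g0:]"
      by (elim degree_eq_zeroE) simp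
    then show ?thesis
      using xi_no_factor_in_x[OF assms, of f g0] fg by (simp add: is_unit_const_poly_iff)
  qed
qed

section \<open>Uniqueness\<close>

lemma pcompose_monom: "pcompose (monom c n) r = smult c (r ^ n)"
  by (induction n) (simp_all add: monom_0 monom_Suc pcompose_pCons)

lemma coeff_pcompose_x_plus_1:
  fixes q :: "'a::comm_ring_1 poly"
  assumes "degree q \<le> N"
  shows "coeff (pcompose q [:1, 1:]) a = (\<Sum>i\<le>N. coeff q i * of_nat (i choose a))"
proof -
  have "pcompose q [:1, 1:] = (\<Sum>i\<le>N. smult (coeff q i) ([:1, 1:] ^ i))"
    by (subst poly_as_sum_of_monoms'[OF assms, symmetric]) (simp add: pcompose_sum pcompose_monom)
  moreover have "coeff ([:1, 1:] ^ i) a = (of_nat (i choose a) :: 'a)" for i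
    by (simp add: coeff_linear_poly_power_if binomial_eq_0)
  ultimately show ?thesis
    by (simp add: coeff_sum)
qed

lemma bcoeff_bshift_1_1:
  fixes p :: "'a::comm_ring_1 poly poly"
  assumes "degree p \<le> N" "\<And>j. degree (coeff p j) \<le> N"
  shows "bcoeff (bshift p 1 1) a b = (\<Sum>j\<le>N. \<Sum>i\<le>N. bcoeff p i j * of_nat (i choose a) * of_nat (j choose b))"
proof -
  have one: "[:[:1:], 1:] = ([:1, 1:] :: 'a poly poly)"
    by (simp add: one_pCons)
  have "degree (map_poly (\<lambda>s. pcompose s [:1, 1:]) p) \<le> N"
    using assms(1) by (intro degree_le allI impI) (simp add: coeff_map_poly coeff_eq_0)
  then have "coeff (bshift p 1 1) b
      = (\<Sum>j\<le>N. coeff (map_poly (\<lambda>s. pcompose s [:1, 1:]) p) j * of_nat (j choose b))"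
    unfolding bshift_def one by (rule coeff_pcompose_x_plus_1)
  also have "\<dots> = (\<Sum>j\<le>N. smult (of_nat (j choose b)) (pcompose (coeff p j) [:1, 1:]))"
    by (simp add: coeff_map_poly of_nat_mult_conv_smult mult.commute)
  finally have "bcoeff (bshift p 1 1) a b
      = (\<Sum>j\<le>N. of_nat (j choose b) * coeff (pcompose (coeff p j) [:1, 1:]) a)"
    by (simp add: bcoeff_def coeff_sum)
  also have "\<dots> = (\<Sum>j\<le>N. \<Sum>i\<le>N. bcoeff p i j * of_nat (i choose a) * of_nat (j choose b))"
    using coeff_pcompose_x_plus_1[OF assms(2)] by (simp add: sum_distrib_left bcoeff_def mult_ac)
  finally show ?thesis .
qed

lemma binomial_moments_eq_0_imp_eq_0:
  fixes d :: "nat \<Rightarrow> 'a::comm_ring_1"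
  assumes supp: "\<And>j. d j \<noteq> 0 \<Longrightarrow> j < n" and "n \<le> Suc N"
    and moments: "\<And>b. b < n \<Longrightarrow> (\<Sum>j\<le>N. d j * of_nat (j choose b)) = 0"
  shows "d j = 0"
proof (rule ccontr)
  assume "d j \<noteq> 0"
  define S where "S = {j. d j \<noteq> 0}"
  have "finite S" "S \<noteq> {}"
    using supp \<open>d j \<noteq> 0\<close> by (auto simp: S_def intro: finite_subset[of _ "{..<n}"])
  define J where "J = Max S"
  have "d J \<noteq> 0" and "J < n" and above: "\<And>i. J < i \<Longrightarrow> d i = 0"
    using Max_in[OF \<open>finite S\<close> \<open>S \<noteq> {}\<close>] Max_ge[OF \<open>finite S\<close>] supp
    by (auto simp: J_def S_def not_le[symmetric])
  \<comment> \<open>the moment of order \<open>J\<close> only sees the highest nonzero value \<open>d J\<close>\<close>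
  have "(\<Sum>i\<le>N. d i * of_nat (i choose J)) = d J * of_nat (J choose J)"
    using \<open>J < n\<close> \<open>n \<le> Suc N\<close> above
    by (intro sum_eq_single) (auto simp: binomial_eq_0 not_le dest: nat_neq_iff[THEN iffD1])
  with moments[OF \<open>J < n\<close>] \<open>d J \<noteq> 0\<close> show False
    by simp
qed

lemma of_nat_mult_choose:
  "(of_nat i * of_nat (i choose a) :: 'a::comm_semiring_1)
     = of_nat (Suc a) * of_nat (i choose Suc a) + of_nat a * of_nat (i choose a)"
proof -
  have "i * (i choose a) = Suc a * (i choose Suc a) + a * (i choose a)"
  proof (cases "a \<le> i")
    case True
    have "Suc a * (i choose Suc a) = (i - a) * (i choose a)"
      unfolding binomial_absorption binomial_absorb_comp ..
    with True show ?thesis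
      by (metis add_mult_distrib le_add_diff_inverse2)
  qed (simp add: binomial_eq_0)
  then show ?thesis
    by (metis of_nat_add of_nat_mult)
qed

lemma binomial_moments2_eq_0_imp_eq_0:
  fixes c :: "nat \<Rightarrow> nat \<Rightarrow> 'a::{idom, ring_char_0}"
  assumes "\<And>i j. c i j \<noteq> 0 \<Longrightarrow> j \<le> i \<and> i < n" "n \<le> Suc N"
    and "\<And>a b. a + b < n \<Longrightarrow> (\<Sum>j\<le>N. \<Sum>i\<le>N. c i j * of_nat (i choose a) * of_nat (j choose b)) = 0"
  shows "c i j = 0"
  using assms
proof (induction n arbitrary: c i j)
  case 0
  then show ?case by force
next
  case (Suc k)
  define M where "M c' a b = (\<Sum>j\<le>N. \<Sum>i\<le>N. c' i j * of_nat (i choose a) * of_nat (j choose b))"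
    for c' :: "nat \<Rightarrow> nat \<Rightarrow> 'a" and a b
  \<comment> \<open>multiplying by \<open>k - i\<close> kills the column \<open>i = k\<close> and lowers the order of the moment conditions by one\<close>
  define c' where "c' i j = (of_nat k - of_nat i) * c i j" for i j
  have moments: "M c a b = 0" if "a + b < Suc k" for a b
    using Suc.prems(3)[OF that] unfolding M_def .
  have shift: "M c' a b = of_nat k * M c a b - of_nat (Suc a) * M c (Suc a) b - of_nat a * M c a b" for a b
  proof -
    have "c' i j * of_nat (i choose a)
        = of_nat k * (c i j * of_nat (i choose a)) - c i j * (of_nat i * of_nat (i choose a))" for i j
      by (simp add: c'_def algebra_simps)
    also have "\<dots> i j = of_nat k * (c i j * of_nat (i choose a))
          - of_nat (Suc a) * (c i j * of_nat (i choose Suc a)) - of_nat a * (c i j * of_nat (i choose a))" for i j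
      unfolding of_nat_mult_choose by (simp add: algebra_simps)
    finally have termwise: "c' i j * of_nat (i choose a)
        = of_nat k * (c i j * of_nat (i choose a))
          - of_nat (Suc a) * (c i j * of_nat (i choose Suc a)) - of_nat a * (c i j * of_nat (i choose a))"
      for i j .
    have "c' i j * of_nat (i choose a) * of_nat (j choose b)
        = of_nat k * (c i j * of_nat (i choose a) * of_nat (j choose b))
          - of_nat (Suc a) * (c i j * of_nat (i choose Suc a) * of_nat (j choose b))
          - of_nat a * (c i j * of_nat (i choose a) * of_nat (j choose b))" for i j
      using arg_cong[OF termwise, of "\<lambda>x. x * of_nat (j choose b)"] by (simp add: algebra_simps)
    then show ?thesis
      by (simp add: M_def sum_subtractf sum_distrib_left)
  qed
  have c'_zero: "c' i j = 0" for i j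
  proof (rule Suc.IH)
    show "j \<le> i \<and> i < k" if "c' i j \<noteq> 0" for i j
      using that Suc.prems(1)[of i j] by (force simp: c'_def)
    show "k \<le> Suc N"
      using Suc.prems(2) by simp
    show "(\<Sum>j\<le>N. \<Sum>i\<le>N. c' i j * of_nat (i choose a) * of_nat (j choose b)) = 0" if "a + b < k" for a b
      using shift[of a b] moments[of a b] moments[of "Suc a" b] that by (simp add: M_def)
  qed
  have off_column: "c i j = 0" if "i \<noteq> k" for i j
    using c'_zero[of i j] that by (simp add: c'_def)
  have "c k j = 0" for j
  proof (rule binomial_moments_eq_0_imp_eq_0[of "c k" "Suc k" N])
    show "j < Suc k" if "c k j \<noteq> 0" for j
      using Suc.prems(1)[OF that] by simp
    show "Suc k \<le> Suc N"
      by (rule Suc.prems(2))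
    show "(\<Sum>j\<le>N. c k j * of_nat (j choose b)) = 0" if "b < Suc k" for b
    proof -
      have "M c 0 b = (\<Sum>j\<le>N. c k j * of_nat (j choose b))"
        unfolding M_def using Suc.prems(2) off_column
        by (intro sum.cong refl) (subst sum_eq_single[of _ k], auto)
      then show ?thesis
        using moments[of 0 b] that by simp
    qed
  qed
  with off_column show ?case
    by (cases "i = k") auto
qed

lemma eq_const_mult_xi_if_vanishes_to_order:
  fixes \<eta> :: "'a::{idom, ring_char_0} poly poly"
  assumes m: "m \<ge> 1" and van: "vanishes_to_order \<eta> (1, 1) m"
    and np: "newton_polygon \<eta> = newton_triangle m"
  shows "\<exists>c. c \<noteq> 0 \<and> \<eta> = [:[:c:]:] * xi m"
proof -
  define c where "c = bcoeff \<eta> m (Suc m)"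
  define z where "z = \<eta> - [:[:c:]:] * xi m"
  have bcoeff_z: "bcoeff z i j = bcoeff \<eta> i j - c * xi_coeff m i j" for i j
    by (simp add: z_def bcoeff_def bcoeff_xi[unfolded bcoeff_def])
  have supp: "j \<le> i \<and> i < m" if "bcoeff z i j \<noteq> 0" for i j
    using that support_if_newton_polygon_eq_newton_triangle[OF m np, of i j]
    by (auto simp: bcoeff_z c_def xi_coeff_def split: if_splits)
  then have "coeff (coeff z j) i = 0" if "\<not> (j \<le> i \<and> i < m)" for i j
    using that by (auto simp: bcoeff_def)
  then have deg: "degree z \<le> m" "degree (coeff z j) \<le> m" for j
    by (intro degree_le allI impI poly_eqI; simp)+
  have "bcoeff z i j = 0" for i j
  proof (rule binomial_moments2_eq_0_imp_eq_0[of "bcoeff z" m m])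
    show "j \<le> i \<and> i < m" if "bcoeff z i j \<noteq> 0" for i j
      using supp that .
    fix a b
    assume ab: "a + b < m"
    have "bshift z 1 1 = bshift \<eta> 1 1 - [:[:c:]:] * bshift (xi m) 1 1"
      by (simp only: z_def bshift_diff bshift_mult bshift_const)
    then have "bcoeff (bshift z 1 1) a b = 0"
      using van xi_vanishes_to_order[of m, where 'a='a] ab
      by (simp add: vanishes_to_order_def bcoeff_def)
    then show "(\<Sum>j\<le>m. \<Sum>i\<le>m. bcoeff z i j * of_nat (i choose a) * of_nat (j choose b)) = 0"
      using bcoeff_bshift_1_1[OF deg] by simp
  qed simp
  then have "z = 0"
    by (intro poly_eqI) (simp add: bcoeff_def)
  then have "\<eta> = [:[:c:]:] * xi m"
    by (simp add: z_def)
  moreover have "\<eta> \<noteq> 0"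
  proof
    assume "\<eta> = 0"
    then have "newton_polygon \<eta> = {}"
      by (simp add: newton_polygon_def bcoeff_def)
    moreover have "(0, 0) \<in> newton_triangle m"
      by (intro hull_inc) simp
    ultimately show False
      using np by simp
  qed
  ultimately show ?thesis
    by (metis mult_zero_left pCons_0_0)
qed

theorem theorem1p1:
  fixes m :: nat
  assumes "alg_closed TYPE('a::field_char_0)"
    and "m \<ge> 1"
  shows "\<exists>\<xi> :: 'a poly poly.
           irreducible \<xi> \<and>
           vanishes_to_order \<xi> (1, 1) m \<and>
           newton_polygon \<xi> = convex hull {(0, 0), (real m - 1, 0), (real m, real m + 1)} \<and>
           (\<forall>\<eta> :: 'a poly poly.
              irreducible \<eta> \<and> vanishes_to_order \<eta> (1, 1) m \<and>
              newton_polygon \<eta> = convex hull {(0, 0), (real m - 1, 0), (real m, real m + 1)}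
              \<longrightarrow> (\<exists>c::'a. c \<noteq> 0 \<and> \<eta> = [:[:c:]:] * \<xi>))"
proof (intro exI[of _ "xi m"] conjI allI impI)
  show "irreducible (xi m :: 'a poly poly)"
    using assms(2) by (rule xi_irreducible)
  show "vanishes_to_order (xi m :: 'a poly poly) (1, 1) m"
    by (rule xi_vanishes_to_order)
  show "newton_polygon (xi m :: 'a poly poly) = newton_triangle m"
    using assms(2) by (rule newton_polygon_xi)
  fix \<eta> :: "'a poly poly"
  assume "irreducible \<eta> \<and> vanishes_to_order \<eta> (1, 1) m \<and> newton_polygon \<eta> = newton_triangle m"
  then show "\<exists>c. c \<noteq> 0 \<and> \<eta> = [:[:c:]:] * xi m"
    using eq_const_mult_xi_if_vanishes_to_order[OF assms(2)] by blast
qed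

end
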